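(* Let $\alpha\neq0$ be real and let $u=u(x)$ be a solution of $$\frac{u''}{1-u'^2}=\frac{\alpha}{u},\qquad u>0,\quad u'^2<1,$$ defined on its maximal domain $I\subset\mathbb R$ (an interval). Then $u$ is symmetric about a vertical line, and $I=\mathbb R$ if $\alpha>0$, while $I$ is a bounded interval if $\alpha<0$. Furthermore: (1) If $\alpha>0$, then $u$ is convex with a unique global minimum, $\lim_{r\to\infty}u(r)=\infty$ and $\lim_{r\to\infty}u'(r)=1$. (2) If $\alpha<0$, then $u$ is concave with a unique global maximum, and if $I=(-b,b)$, then $\lim_{r\to b}u(r)=0$ and $\lim_{r\to b}u'(r)=-1$.
   Context: The maximal domain of $u$ is the largest interval on which the solution exists while satisfying $u>0$ and $u'^2<1$. *)

theory Defs
  imports "HOL-Analysis.Analysis"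
begin

definition is_sol :: "real \<Rightarrow> (real \<Rightarrow> real) \<Rightarrow> real set \<Rightarrow> bool" where
  "is_sol \<alpha> u I \<longleftrightarrow> is_interval I \<and> open I \<and> I \<noteq> {} \<and>
     (\<exists>u' u''. \<forall>x\<in>I. (u has_real_derivative u' x) (at x) \<and>
                       (u' has_real_derivative u'' x) (at x) \<and>
                       u x > 0 \<and> (u' x)\<^sup>2 < 1 \<and>
                       u'' x / (1 - (u' x)\<^sup>2) = \<alpha> / u x)"

definition is_maximal_sol :: "real \<Rightarrow> (real \<Rightarrow> real) \<Rightarrow> real set \<Rightarrow> bool" where
  "is_maximal_sol \<alpha> u I \<longleftrightarrow> is_sol \<alpha> u I \<and>
     (\<forall>v J. is_sol \<alpha> v J \<and> I \<subseteq> J \<and> (\<forall>x\<in>I. v x = u x) \<longrightarrow> J = I)"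

end

theory Submission
  imports Defs
begin

text \<open>
  Write \<open>u' = tanh s\<close>, where \<open>s = artanh u'\<close> is the rapidity. The equation becomes
  \<open>s' = \<alpha> / u\<close>, hence \<open>(ln u)' = tanh s * s' / \<alpha> = (ln (cosh s powr (1 / \<alpha>)))'\<close> and
  \<open>u = \<Phi> s\<close> with \<open>\<Phi> t = A * cosh t powr (1 / \<alpha>)\<close> for some \<open>A > 0\<close>. Then \<open>s' = \<alpha> / \<Phi> s\<close>,
  so \<open>P (s x) = \<alpha> * x + c\<close> for the primitive \<open>P\<close> of \<open>\<Phi>\<close> vanishing at 0. Conversely
  \<open>x \<mapsto> \<Phi> (P\<inverse> (\<alpha> * x + c))\<close> is a solution wherever \<open>\<alpha> * x + c \<in> range P\<close>, so maximality
  forces \<open>I = {x. \<alpha> * x + c \<in> range P}\<close>. As \<open>\<Phi>\<close> is even and positive, \<open>P\<close> is odd and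
  strictly increasing; it is onto if \<open>\<alpha> > 0\<close> (\<open>\<Phi> \<ge> A\<close>) and bounded if \<open>\<alpha> < 0\<close> (\<open>\<Phi>\<close> decays
  exponentially). The solution is symmetric about the zero of \<open>s\<close>, where it attains its
  extremum \<open>A\<close>; \<open>u' = tanh s\<close> is monotone, and \<open>s \<rightarrow> \<plusminus>\<infinity>\<close> at the ends of \<open>I\<close>.
\<close>

lemma tanh_artanh_real:
  fixes x :: real
  assumes "\<bar>x\<bar> < 1"
  shows "tanh (artanh x) = x"
proof -
  define q where "q = sqrt ((1 + x) / (1 - x))"
  have q2: "q\<^sup>2 = (1 + x) / (1 - x)" and "q > 0"
    using assms by (auto simp: q_def)
  have "tanh (artanh x) = tanh (ln q)"
    using assms by (simp add: artanh_def q_def ln_sqrt)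
  also have "\<dots> = (q\<^sup>2 - 1) / (q\<^sup>2 + 1)"
    using \<open>q > 0\<close> by (rule tanh_ln_real)
  also have "\<dots> = x"
    using assms unfolding q2 by (simp add: field_simps)
  finally show ?thesis .
qed

lemma continuous_has_primitive:
  fixes f :: "real \<Rightarrow> real"
  assumes "continuous_on UNIV f"
  obtains F where "F 0 = 0" "\<And>t. (F has_real_derivative f t) (at t)"
proof -
  obtain G where "\<And>t. (G has_vector_derivative f t) (at t)"
    using einterval_antiderivative[of "-\<infinity>" "\<infinity>" f] assms
    by (auto simp: continuous_on_eq_continuous_at)
  then have "((\<lambda>t. G t - G 0) has_real_derivative f t) (at t)" for t
    by (auto simp: has_real_derivative_iff_has_vector_derivative intro!: derivative_eq_intros)
  then show thesis
    by (rule that[rotated]) simp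
qed

lemma filterlim_at_top_mono_comp:
  fixes P :: "real \<Rightarrow> real"
  assumes "mono P" and "filterlim (\<lambda>x. P (f x)) at_top F"
  shows "filterlim f at_top F"
  unfolding filterlim_at_top
proof
  fix Z
  show "\<forall>\<^sub>F x in F. Z \<le> f x"
    using filterlim_at_top_dense[THEN iffD1, OF assms(2), rule_format, of "P Z"]
    by eventually_elim (erule mono_invE[OF assms(1)])
qed

lemma filterlim_at_bot_mono_comp:
  fixes P :: "real \<Rightarrow> real"
  assumes "mono P" and "\<And>t. l < P t" and "((\<lambda>x. P (f x)) \<longlongrightarrow> l) F"
  shows "filterlim f at_bot F"
  unfolding filterlim_at_bot
proof
  fix Z
  show "\<forall>\<^sub>F x in F. f x \<le> Z"
    using order_tendstoD(2)[OF assms(3) assms(2)[of Z]]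
    by eventually_elim (erule mono_invE[OF assms(1)])
qed

definition cosh_pow :: "real \<Rightarrow> real \<Rightarrow> real \<Rightarrow> real" where
  "cosh_pow A p t = A * cosh t powr p"

lemma cosh_pow_pos: "0 < A \<Longrightarrow> 0 < cosh_pow A p t"
  by (simp add: cosh_pow_def)

lemma cosh_pow_minus [simp]: "cosh_pow A p (- t) = cosh_pow A p t"
  by (simp add: cosh_pow_def)

lemma cosh_pow_0 [simp]: "cosh_pow A p 0 = A"
  by (simp add: cosh_pow_def)

lemma has_real_derivative_cosh_pow:
  "(cosh_pow A p has_real_derivative p * tanh t * cosh_pow A p t) (at t)"
  unfolding cosh_pow_def[abs_def]
  by (auto intro!: derivative_eq_intros simp: tanh_def powr_diff field_simps)

lemma continuous_on_cosh_pow: "continuous_on S (cosh_pow A p)"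
  by (meson DERIV_isCont continuous_at_imp_continuous_on has_real_derivative_cosh_pow)

lemma cosh_pow_gt:
  assumes "0 < A" "0 < p" "t \<noteq> 0"
  shows "A < cosh_pow A p t"
proof -
  have "1 < cosh t"
    using assms(3) cosh_real_nonneg_less_iff[of 0 "\<bar>t\<bar>"] by (simp add: cosh_real_abs)
  then have "1 powr p < cosh t powr p"
    using assms(2) by (intro powr_less_mono2) auto
  then show ?thesis
    using assms(1) by (simp add: cosh_pow_def)
qed

lemma cosh_pow_lt:
  assumes "0 < A" "p < 0" "t \<noteq> 0"
  shows "cosh_pow A p t < A"
proof -
  have "1 < cosh t"
    using assms(3) cosh_real_nonneg_less_iff[of 0 "\<bar>t\<bar>"] by (simp add: cosh_real_abs)
  then have "cosh t powr p < 1 powr p"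
    using assms(2) by (intro powr_less_mono2_neg) auto
  then show ?thesis
    using assms(1) by (simp add: cosh_pow_def)
qed

lemma cosh_pow_le_exp:
  assumes "0 < A" "p < 0"
  shows "cosh_pow A p t \<le> A * 2 powr (- p) * exp (p * t)"
proof -
  have "cosh t powr p \<le> (exp t / 2) powr p"
    using assms(2) by (intro powr_mono2') (auto simp: cosh_def)
  also have "\<dots> = 2 powr (- p) * exp (p * t)"
    by (simp add: powr_divide exp_powr_real powr_minus_divide mult.commute)
  finally show ?thesis
    using assms(1) by (simp add: cosh_pow_def)
qed

lemma filterlim_cosh_pow_at_top:
  assumes "0 < A" "0 < p"
  shows "filterlim (cosh_pow A p) at_top at_top"
proof -
  have "filterlim (\<lambda>t. p * ln (cosh t)) at_top at_top"
    using assms(2) filterlim_compose[OF ln_at_top cosh_real_at_top]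
    by (intro filterlim_tendsto_pos_mult_at_top[OF tendsto_const])
  then have "filterlim (\<lambda>t. cosh t powr p) at_top at_top"
    by (simp add: powr_def filterlim_compose[OF exp_at_top])
  then show ?thesis
    unfolding cosh_pow_def[abs_def] using assms(1)
    by (intro filterlim_tendsto_pos_mult_at_top[OF tendsto_const])
qed

lemma tendsto_cosh_pow_at_bot:
  assumes "p < 0"
  shows "(cosh_pow A p \<longlongrightarrow> 0) at_bot"
  unfolding cosh_pow_def[abs_def]
  using tendsto_mult_right_zero[OF tendsto_neg_powr[OF assms cosh_real_at_bot], of A] .

locale cosh_pow_primitive =
  fixes A p :: real and P :: "real \<Rightarrow> real"
  assumes scale_pos: "0 < A"
    and primitive_0: "P 0 = 0"
    and has_real_derivative_primitive: "\<And>t. (P has_real_derivative cosh_pow A p t) (at t)"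
begin

lemma continuous_on_primitive: "continuous_on S P"
  by (meson DERIV_isCont continuous_at_imp_continuous_on has_real_derivative_primitive)

lemma strict_mono_primitive: "strict_mono P"
proof (rule strict_monoI)
  fix s t :: real
  assume "s < t"
  then show "P s < P t"
    by (rule DERIV_pos_imp_increasing)
      (use has_real_derivative_primitive cosh_pow_pos[OF scale_pos] in blast)
qed

lemma inj_primitive: "inj P"
  using strict_mono_primitive by (rule strict_mono_imp_inj_on)

lemma primitive_minus: "P (- t) = - P t"
proof -
  have "((\<lambda>t. P t + P (- t)) has_real_derivative 0) (at x)" for x
    using DERIV_add[OF has_real_derivative_primitive
        DERIV_chain2[OF has_real_derivative_primitive DERIV_minus[OF DERIV_ident]]]
    by simp
  from DERIV_isconst_all[of "\<lambda>t. P t + P (- t)" t 0] this show ?thesis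
    by (simp add: primitive_0)
qed

lemma open_range_primitive: "open (range P)"
  by (rule injective_into_1d_imp_open_map_UNIV[OF open_UNIV continuous_on_primitive inj_primitive])
    simp

lemma is_interval_range_primitive: "is_interval (range P)"
  using connected_continuous_image[OF continuous_on_primitive connected_UNIV]
  by (simp add: is_interval_connected_1)

lemma inv_primitive_has_real_derivative:
  assumes "y \<in> range P"
  shows "(inv P has_real_derivative 1 / cosh_pow A p (inv P y)) (at y)"
proof -
  have "continuous_on (range P) (inv P)"
    using continuous_on_inverse_open[OF open_UNIV continuous_on_primitive, of "inv P"] inj_primitive
    by simp
  then have cont: "continuous (at y) (inv P)"
    using open_range_primitive assms continuous_on_eq_continuous_at by blast
  have "(inv P has_real_derivative inverse (cosh_pow A p (inv P y))) (at y)"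
    by (rule has_field_derivative_inverse_basic[where f = P, OF has_real_derivative_primitive _ cont
          open_range_primitive assms])
      (use cosh_pow_pos[OF scale_pos, of p "inv P y"] in \<open>auto simp: f_inv_into_f\<close>)
  then show ?thesis
    by (simp add: inverse_eq_divide)
qed

lemma range_primitive_eq_UNIV:
  assumes "0 < p"
  shows "range P = UNIV"
proof -
  have lower: "A * t \<le> P t" if "0 \<le> t" for t
  proof -
    have "A \<le> cosh_pow A p x" for x
      using cosh_pow_gt[OF scale_pos assms, of x] by (cases "x = 0") auto
    then have "P 0 - A * 0 \<le> P t - A * t"
      by (intro deriv_nonneg_imp_mono[OF _ _ that]) (auto intro!: derivative_eq_intros has_real_derivative_primitive)
    then show ?thesis
      by (simp add: primitive_0)
  qed
  have "y \<in> range P" for y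
  proof -
    define t where "t = \<bar>y\<bar> / A"
    have "y \<le> P t" and "P (- t) \<le> y"
      using lower[of t] scale_pos by (auto simp: t_def primitive_minus)
    then show ?thesis
      using is_interval_range_primitive unfolding is_interval_1 by blast
  qed
  then show ?thesis
    by blast
qed

lemma bounded_range_primitive:
  assumes "p < 0"
  shows "bounded (range P)"
proof -
  define B where "B = A * 2 powr (- p)"
  have upper: "P t \<le> B / (- p)" if "0 \<le> t" for t
  proof -
    have "B * exp (p * 0) / p - P 0 \<le> B * exp (p * t) / p - P t"
      using cosh_pow_le_exp[OF scale_pos assms] assms
      by (intro deriv_nonneg_imp_mono[OF _ _ that])
        (auto intro!: derivative_eq_intros has_real_derivative_primitive simp: B_def mult_ac)
    moreover have "B * exp (p * t) / p \<le> 0"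
      using assms scale_pos by (simp add: B_def divide_nonneg_neg)
    ultimately show ?thesis
      using assms by (simp add: primitive_0 divide_minus_right)
  qed
  have "\<bar>P t\<bar> \<le> B / (- p)" for t
  proof (cases "0 \<le> t")
    case True
    then show ?thesis
      using upper[of t] strict_mono_less_eq[OF strict_mono_primitive, of 0 t]
      by (simp add: primitive_0)
  next
    case False
    then show ?thesis
      using upper[of "- t"] strict_mono_less_eq[OF strict_mono_primitive, of t 0]
      by (simp add: primitive_0 primitive_minus)
  qed
  then show ?thesis
    unfolding bounded_real by blast
qed

end

lemma affine_preimage_open_interval:
  fixes S :: "real set"
  assumes "is_interval S" "open S" "a \<noteq> 0"
  shows "is_interval {x. a * x + c \<in> S}" and "open {x. a * x + c \<in> S}"
proof -
  have affine: "{x. a * x + c \<in> S} = (\<lambda>y. - c / a + (1 / a) *\<^sub>R y) ` S"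
    using assms(3) by (auto simp: image_iff field_simps)
  show "is_interval {x. a * x + c \<in> S}"
    using assms(1) unfolding affine is_interval_convex_1 by (rule convex_affinity)
  show "open {x. a * x + c \<in> S}"
    unfolding affine by (rule open_affinity[OF assms(2)]) (simp add: assms(3))
qed

lemma is_sol_inv_primitive:
  assumes "\<alpha> \<noteq> 0" and "cosh_pow_primitive A (1 / \<alpha>) P"
  shows "is_sol \<alpha> (\<lambda>x. cosh_pow A (1 / \<alpha>) (inv P (\<alpha> * x + c))) {x. \<alpha> * x + c \<in> range P}"
proof -
  interpret cosh_pow_primitive A "1 / \<alpha>" P
    by (fact assms(2))
  define D where "D = {x. \<alpha> * x + c \<in> range P}"
  define \<sigma> where "\<sigma> x = inv P (\<alpha> * x + c)" for x
  define v where "v x = cosh_pow A (1 / \<alpha>) (\<sigma> x)" for x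
  have v_pos: "0 < v x" for x
    by (simp add: v_def cosh_pow_pos scale_pos)
  have \<sigma>': "(\<sigma> has_real_derivative \<alpha> / v x) (at x)" if "x \<in> D" for x
  proof -
    have "\<alpha> * x + c \<in> range P"
      using that by (simp add: D_def)
    then have "(\<sigma> has_real_derivative 1 / v x * \<alpha>) (at x)"
      unfolding \<sigma>_def[abs_def] v_def \<sigma>_def
      by (rule DERIV_chain2[OF inv_primitive_has_real_derivative]) (auto intro!: derivative_eq_intros)
    then show ?thesis
      by simp
  qed
  have v': "(v has_real_derivative tanh (\<sigma> x)) (at x)" if "x \<in> D" for x
    using DERIV_chain2[OF has_real_derivative_cosh_pow[of A "1 / \<alpha>"] \<sigma>'[OF that]]
      v_pos[of x] assms(1)
    by (simp add: v_def[abs_def] field_simps)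
  have v'': "((\<lambda>x. tanh (\<sigma> x)) has_real_derivative (1 - (tanh (\<sigma> x))\<^sup>2) * (\<alpha> / v x)) (at x)"
    if "x \<in> D" for x
    using \<sigma>'[OF that] by (auto intro!: derivative_eq_intros)
  have slope_bound: "(tanh (\<sigma> x))\<^sup>2 < 1" for x
    using tanh_real_bounds[of "\<sigma> x"] by (simp add: abs_square_less_1 abs_less_iff)
  have "- c / \<alpha> \<in> D"
    using assms(1) primitive_0 by (auto simp: D_def intro: range_eqI)
  moreover have "is_interval D" and "open D"
    unfolding D_def
    by (fact affine_preimage_open_interval[OF is_interval_range_primitive open_range_primitive assms(1)])+
  moreover have "\<exists>u' u''. \<forall>x\<in>D. (v has_real_derivative u' x) (at x) \<and>
      (u' has_real_derivative u'' x) (at x) \<and> 0 < v x \<and> (u' x)\<^sup>2 < 1 \<and>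
      u'' x / (1 - (u' x)\<^sup>2) = \<alpha> / v x"
    by (rule exI[of _ "\<lambda>x. tanh (\<sigma> x)"], rule exI[of _ "\<lambda>x. (1 - (tanh (\<sigma> x))\<^sup>2) * (\<alpha> / v x)"])
      (use v' v'' v_pos slope_bound in \<open>auto simp: less_imp_neq\<close>)
  ultimately show ?thesis
    unfolding is_sol_def D_def[symmetric] \<sigma>_def[symmetric] v_def[symmetric] by blast
qed

locale ode_solution =
  fixes \<alpha> :: real and u u' u'' :: "real \<Rightarrow> real" and I :: "real set"
  assumes alpha_nonzero: "\<alpha> \<noteq> 0"
    and is_interval_domain: "is_interval I"
    and open_domain: "open I"
    and domain_nonempty: "I \<noteq> {}"
    and has_real_derivative_u: "x \<in> I \<Longrightarrow> (u has_real_derivative u' x) (at x)"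
    and has_real_derivative_u': "x \<in> I \<Longrightarrow> (u' has_real_derivative u'' x) (at x)"
    and u_pos: "x \<in> I \<Longrightarrow> 0 < u x"
    and slope_bound: "x \<in> I \<Longrightarrow> (u' x)\<^sup>2 < 1"
    and ode: "x \<in> I \<Longrightarrow> u'' x / (1 - (u' x)\<^sup>2) = \<alpha> / u x"
begin

lemma convex_domain: "convex I"
  using is_interval_domain by (simp add: is_interval_convex_1)

definition rapidity :: "real \<Rightarrow> real" where
  "rapidity x = artanh (u' x)"

lemma u'_eq_tanh_rapidity: "x \<in> I \<Longrightarrow> u' x = tanh (rapidity x)"
  using slope_bound[of x] by (simp add: rapidity_def tanh_artanh_real abs_square_less_1)

lemma deriv_u_eq_tanh_rapidity: "x \<in> I \<Longrightarrow> deriv u x = tanh (rapidity x)"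
  using DERIV_imp_deriv[OF has_real_derivative_u] by (simp add: u'_eq_tanh_rapidity)

lemma has_real_derivative_rapidity:
  assumes "x \<in> I"
  shows "(rapidity has_real_derivative \<alpha> / u x) (at x)"
proof -
  have "\<bar>u' x\<bar> < 1"
    using slope_bound[OF assms] by (simp add: abs_square_less_1)
  then have "(rapidity has_real_derivative 1 / (1 - (u' x)\<^sup>2) * u'' x) (at x)"
    unfolding rapidity_def[abs_def]
    by (intro DERIV_chain2[OF artanh_real_has_field_derivative has_real_derivative_u'[OF assms]])
      auto
  then show ?thesis
    using ode[OF assms] by simp
qed

lemma first_integral:
  obtains A where "0 < A" and "\<And>x. x \<in> I \<Longrightarrow> u x = cosh_pow A (1 / \<alpha>) (rapidity x)"
proof -
  define C where "C x = cosh_pow 1 (1 / \<alpha>) (rapidity x)" for x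
  have C_pos: "0 < C x" for x
    by (simp add: C_def cosh_pow_pos)
  have "((\<lambda>x. u x / C x) has_real_derivative 0) (at x within I)" if "x \<in> I" for x
  proof -
    have "(C has_real_derivative tanh (rapidity x) * C x / u x) (at x)"
      using DERIV_chain2[OF has_real_derivative_cosh_pow[of 1 "1 / \<alpha>"] has_real_derivative_rapidity[OF that]]
        alpha_nonzero by (simp add: C_def[abs_def] field_simps)
    from DERIV_divide[OF has_real_derivative_u[OF that] this]
    have "((\<lambda>x. u x / C x) has_real_derivative 0) (at x)"
      using u_pos[OF that] C_pos[of x] by (simp add: u'_eq_tanh_rapidity[OF that])
    then show ?thesis
      by (rule has_field_derivative_at_within)
  qed
  then have "\<exists>A. \<forall>x\<in>I. u x / C x = A"
    by (rule has_field_derivative_zero_constant[OF convex_domain])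
  then obtain A where A: "\<And>x. x \<in> I \<Longrightarrow> u x / C x = A"
    by blast
  obtain x0 where "x0 \<in> I"
    using domain_nonempty by blast
  show thesis
  proof
    show "0 < A"
      using A[OF \<open>x0 \<in> I\<close>] u_pos[OF \<open>x0 \<in> I\<close>] C_pos[of x0] by auto
    show "u x = cosh_pow A (1 / \<alpha>) (rapidity x)" if "x \<in> I" for x
      using A[OF that] C_pos[of x] by (auto simp: C_def cosh_pow_def field_simps)
  qed
qed

lemma quadrature:
  assumes "cosh_pow_primitive A (1 / \<alpha>) P"
    and u_eq: "\<And>x. x \<in> I \<Longrightarrow> u x = cosh_pow A (1 / \<alpha>) (rapidity x)"
  obtains c where "\<And>x. x \<in> I \<Longrightarrow> P (rapidity x) = \<alpha> * x + c"
proof -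
  have "((\<lambda>x. P (rapidity x) - \<alpha> * x) has_real_derivative 0) (at x within I)" if "x \<in> I" for x
  proof -
    have "((\<lambda>x. P (rapidity x) - \<alpha> * x) has_real_derivative
            cosh_pow A (1 / \<alpha>) (rapidity x) * (\<alpha> / u x) - \<alpha>) (at x)"
      using DERIV_chain2[OF cosh_pow_primitive.has_real_derivative_primitive[OF assms(1)]
          has_real_derivative_rapidity[OF that]]
      by (auto intro!: derivative_eq_intros)
    also have "cosh_pow A (1 / \<alpha>) (rapidity x) * (\<alpha> / u x) - \<alpha> = 0"
      using u_eq[OF that] u_pos[OF that] by simp
    finally show ?thesis
      by (rule has_field_derivative_at_within)
  qed
  then have "\<exists>c. \<forall>x\<in>I. P (rapidity x) - \<alpha> * x = c"
    by (rule has_field_derivative_zero_constant[OF convex_domain])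
  then obtain c where "\<And>x. x \<in> I \<Longrightarrow> P (rapidity x) - \<alpha> * x = c"
    by blast
  then show thesis
    by (intro that) (simp add: algebra_simps)
qed

lemma domain_eq_if_maximal:
  assumes maximal: "\<And>v J. is_sol \<alpha> v J \<Longrightarrow> I \<subseteq> J \<Longrightarrow> \<forall>x\<in>I. v x = u x \<Longrightarrow> J = I"
    and primitive: "cosh_pow_primitive A (1 / \<alpha>) P"
    and u_eq: "\<And>x. x \<in> I \<Longrightarrow> u x = cosh_pow A (1 / \<alpha>) (rapidity x)"
    and P_rapidity: "\<And>x. x \<in> I \<Longrightarrow> P (rapidity x) = \<alpha> * x + c"
  shows "I = {x. \<alpha> * x + c \<in> range P}"
proof (rule sym, rule maximal)
  show "is_sol \<alpha> (\<lambda>x. cosh_pow A (1 / \<alpha>) (inv P (\<alpha> * x + c))) {x. \<alpha> * x + c \<in> range P}"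
    by (fact is_sol_inv_primitive[OF alpha_nonzero primitive])
  show "I \<subseteq> {x. \<alpha> * x + c \<in> range P}"
    using P_rapidity[symmetric] by blast
  show "\<forall>x\<in>I. cosh_pow A (1 / \<alpha>) (inv P (\<alpha> * x + c)) = u x"
    using P_rapidity[symmetric] u_eq inv_f_f[OF cosh_pow_primitive.inj_primitive[OF primitive]]
    by simp
qed

end

locale parametrized_solution =
  ode_solution \<alpha> u u' u'' I + cosh_pow_primitive A "1 / \<alpha>" P
  for \<alpha> u u' u'' I A P +
  fixes c :: real
  assumes u_eq_cosh_pow: "x \<in> I \<Longrightarrow> u x = cosh_pow A (1 / \<alpha>) (rapidity x)"
    and primitive_rapidity: "x \<in> I \<Longrightarrow> P (rapidity x) = \<alpha> * x + c"
    and domain_eq: "I = {x. \<alpha> * x + c \<in> range P}"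
begin

definition center :: real where
  "center = - c / \<alpha>"

lemma center_in_domain: "center \<in> I"
proof -
  have "\<alpha> * center + c = P 0"
    using alpha_nonzero by (simp add: center_def primitive_0)
  then show ?thesis
    unfolding domain_eq by (metis mem_Collect_eq rangeI)
qed

lemma rapidity_eq_0_iff:
  assumes "x \<in> I"
  shows "rapidity x = 0 \<longleftrightarrow> x = center"
proof -
  have "rapidity x = 0 \<longleftrightarrow> P (rapidity x) = P 0"
    by (simp add: inj_eq[OF inj_primitive])
  also have "\<dots> \<longleftrightarrow> x = center"
    using primitive_rapidity[OF assms] alpha_nonzero
    by (auto simp: primitive_0 center_def field_simps)
  finally show ?thesis .
qed

lemma u_center: "u center = A"
  using u_eq_cosh_pow[OF center_in_domain] rapidity_eq_0_iff[OF center_in_domain] by simp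

lemma symmetric_about_center:
  assumes "x \<in> I"
  shows "2 * center - x \<in> I \<and> u (2 * center - x) = u x"
proof
  have reflect: "\<alpha> * (2 * center - x) + c = P (- rapidity x)"
    using primitive_rapidity[OF assms] alpha_nonzero
    by (simp add: primitive_minus center_def field_simps)
  then show x': "2 * center - x \<in> I"
    by (simp add: domain_eq)
  have "P (rapidity (2 * center - x)) = P (- rapidity x)"
    using primitive_rapidity[OF x'] reflect by simp
  then have "rapidity (2 * center - x) = - rapidity x"
    by (simp add: inj_eq[OF inj_primitive])
  then show "u (2 * center - x) = u x"
    using u_eq_cosh_pow[OF x'] u_eq_cosh_pow[OF assms] by simp
qed

lemma rapidity_mono:
  assumes "0 < \<alpha>" "x \<in> I" "y \<in> I" "x \<le> y"
  shows "rapidity x \<le> rapidity y"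
proof -
  have "P (rapidity x) \<le> P (rapidity y)"
    using assms by (simp add: primitive_rapidity)
  then show ?thesis
    by (simp add: strict_mono_less_eq[OF strict_mono_primitive])
qed

lemma rapidity_antimono:
  assumes "\<alpha> < 0" "x \<in> I" "y \<in> I" "x \<le> y"
  shows "rapidity y \<le> rapidity x"
proof -
  have "P (rapidity y) \<le> P (rapidity x)"
    using assms by (simp add: primitive_rapidity mult_left_mono_neg)
  then show ?thesis
    by (simp add: strict_mono_less_eq[OF strict_mono_primitive])
qed

lemma convex_on_domain:
  assumes "0 < \<alpha>"
  shows "convex_on I u"
  using is_interval_domain
  by (intro convex_on_realI[OF _ has_real_derivative_u])
    (auto simp: is_interval_connected_1 u'_eq_tanh_rapidity intro: rapidity_mono[OF assms])

lemma concave_on_domain: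
  assumes "\<alpha> < 0"
  shows "concave_on I u"
  unfolding concave_on_def using is_interval_domain
  by (intro convex_on_realI[OF _ DERIV_minus[OF has_real_derivative_u]])
    (auto simp: is_interval_connected_1 u'_eq_tanh_rapidity intro: rapidity_antimono[OF assms])

lemma u_center_less:
  assumes "0 < \<alpha>" "x \<in> I" "x \<noteq> center"
  shows "u center < u x"
proof -
  have "rapidity x \<noteq> 0"
    using rapidity_eq_0_iff[OF assms(2)] assms(3) by simp
  then have "A < cosh_pow A (1 / \<alpha>) (rapidity x)"
    using cosh_pow_gt[OF scale_pos] assms(1) by simp
  then show ?thesis
    using u_eq_cosh_pow[OF assms(2)] u_center by simp
qed

lemma u_less_center:
  assumes "\<alpha> < 0" "x \<in> I" "x \<noteq> center"
  shows "u x < u center"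
proof -
  have "rapidity x \<noteq> 0"
    using rapidity_eq_0_iff[OF assms(2)] assms(3) by simp
  then have "cosh_pow A (1 / \<alpha>) (rapidity x) < A"
    using cosh_pow_lt[OF scale_pos] assms(1) by simp
  then show ?thesis
    using u_eq_cosh_pow[OF assms(2)] u_center by simp
qed

lemma unique_minimum:
  assumes "0 < \<alpha>"
  shows "\<exists>!x0. x0 \<in> I \<and> (\<forall>x\<in>I. u x0 \<le> u x)"
proof (rule ex1I[of _ center])
  show "center \<in> I \<and> (\<forall>x\<in>I. u center \<le> u x)"
    using center_in_domain u_center_less[OF assms] by (metis less_imp_le order_refl)
  show "y = center" if "y \<in> I \<and> (\<forall>x\<in>I. u y \<le> u x)" for y
    using that center_in_domain u_center_less[OF assms, of y] by fastforce
qed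

lemma unique_maximum:
  assumes "\<alpha> < 0"
  shows "\<exists>!x0. x0 \<in> I \<and> (\<forall>x\<in>I. u x \<le> u x0)"
proof (rule ex1I[of _ center])
  show "center \<in> I \<and> (\<forall>x\<in>I. u x \<le> u center)"
    using center_in_domain u_less_center[OF assms] by (metis less_imp_le order_refl)
  show "y = center" if "y \<in> I \<and> (\<forall>x\<in>I. u x \<le> u y)" for y
    using that center_in_domain u_less_center[OF assms, of y] by fastforce
qed

lemma domain_eq_UNIV:
  assumes "0 < \<alpha>"
  shows "I = UNIV"
  using range_primitive_eq_UNIV assms by (simp add: domain_eq)

lemma bounded_domain:
  assumes "\<alpha> < 0"
  shows "bounded I"
proof -
  obtain M where M: "\<And>t. \<bar>P t\<bar> \<le> M"
    using bounded_range_primitive assms unfolding bounded_real by auto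
  have "\<bar>x\<bar> \<le> (M + \<bar>c\<bar>) / \<bar>\<alpha>\<bar>" if "x \<in> I" for x
  proof -
    have "\<bar>\<alpha> * x\<bar> = \<bar>P (rapidity x) - c\<bar>"
      using primitive_rapidity[OF that] by simp
    also have "\<dots> \<le> M + \<bar>c\<bar>"
      using abs_triangle_ineq4[of "P (rapidity x)" c] M[of "rapidity x"] by linarith
    finally have "\<bar>\<alpha> * x\<bar> \<le> M + \<bar>c\<bar>" .
    then show ?thesis
      using alpha_nonzero by (simp add: abs_mult field_simps)
  qed
  then show ?thesis
    unfolding bounded_real by blast
qed

lemma filterlim_rapidity_at_top:
  assumes "0 < \<alpha>"
  shows "filterlim rapidity at_top at_top"
proof (rule filterlim_at_top_mono_comp[OF strict_mono_mono[OF strict_mono_primitive]])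
  have "filterlim (\<lambda>x. c + \<alpha> * x) at_top at_top"
    by (intro filterlim_tendsto_add_at_top[OF tendsto_const]
        filterlim_tendsto_pos_mult_at_top[OF tendsto_const assms filterlim_ident])
  then show "filterlim (\<lambda>x. P (rapidity x)) at_top at_top"
    using primitive_rapidity domain_eq_UNIV[OF assms] by (simp add: add.commute)
qed

lemma filterlim_u_at_top:
  assumes "0 < \<alpha>"
  shows "filterlim u at_top at_top"
proof -
  have "u = (\<lambda>x. cosh_pow A (1 / \<alpha>) (rapidity x))"
    using u_eq_cosh_pow domain_eq_UNIV[OF assms] by auto
  then show ?thesis
    using filterlim_compose[OF filterlim_cosh_pow_at_top filterlim_rapidity_at_top] scale_pos assms
    by simp
qed

lemma tendsto_deriv_u_at_top:
  assumes "0 < \<alpha>"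
  shows "(deriv u \<longlongrightarrow> 1) at_top"
proof -
  have "deriv u = (\<lambda>x. tanh (rapidity x))"
    using deriv_u_eq_tanh_rapidity domain_eq_UNIV[OF assms] by auto
  then show ?thesis
    using filterlim_compose[OF tanh_real_at_top filterlim_rapidity_at_top[OF assms]] by simp
qed

context
  fixes b :: real
  assumes neg: "\<alpha> < 0" and domain_symmetric: "I = {-b<..<b}"
begin

lemma eventually_in_domain_at_left: "\<forall>\<^sub>F x in at_left b. x \<in> I"
  using domain_nonempty eventually_at_left_real[of "-b" b] by (auto simp: domain_symmetric)

lemma filterlim_rapidity_at_left: "filterlim rapidity at_bot (at_left b)"
proof (rule filterlim_at_bot_mono_comp[OF strict_mono_mono[OF strict_mono_primitive]])
  show "\<alpha> * b + c < P t" for t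
  proof -
    have "(P t - c) / \<alpha> \<in> I"
      using alpha_nonzero by (simp add: domain_eq)
    then have "(P t - c) / \<alpha> < b"
      by (simp add: domain_symmetric)
    then show ?thesis
      using neg by (simp add: field_simps)
  qed
  have "((\<lambda>x. \<alpha> * x + c) \<longlongrightarrow> \<alpha> * b + c) (at_left b)"
    by (intro tendsto_intros)
  then show "((\<lambda>x. P (rapidity x)) \<longlongrightarrow> \<alpha> * b + c) (at_left b)"
    by (rule Lim_transform_eventually)
      (use eventually_in_domain_at_left in \<open>eventually_elim, simp add: primitive_rapidity\<close>)
qed

lemma tendsto_u_at_left: "(u \<longlongrightarrow> 0) (at_left b)"
proof -
  have "1 / \<alpha> < 0"
    using neg by simp
  from filterlim_compose[OF tendsto_cosh_pow_at_bot[OF this] filterlim_rapidity_at_left]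
  show ?thesis
    by (rule Lim_transform_eventually)
      (use eventually_in_domain_at_left in \<open>eventually_elim, simp add: u_eq_cosh_pow\<close>)
qed

lemma tendsto_deriv_u_at_left: "(deriv u \<longlongrightarrow> -1) (at_left b)"
  using filterlim_compose[OF tanh_real_at_bot filterlim_rapidity_at_left]
  by (rule Lim_transform_eventually)
    (use eventually_in_domain_at_left in \<open>eventually_elim, simp add: deriv_u_eq_tanh_rapidity\<close>)

end

end

lemma maximal_sol_parametrization:
  assumes "\<alpha> \<noteq> 0" and "is_maximal_sol \<alpha> u I"
  obtains u' u'' A P c where "parametrized_solution \<alpha> u u' u'' I A P c"
proof -
  obtain u' u'' where sol: "ode_solution \<alpha> u u' u'' I"
    using assms unfolding is_maximal_sol_def is_sol_def ode_solution_def by blast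
  then interpret ode_solution \<alpha> u u' u'' I .
  obtain A where A: "0 < A" "\<And>x. x \<in> I \<Longrightarrow> u x = cosh_pow A (1 / \<alpha>) (rapidity x)"
    using first_integral by blast
  obtain P where "P 0 = 0" "\<And>t. (P has_real_derivative cosh_pow A (1 / \<alpha>) t) (at t)"
    using continuous_has_primitive[OF continuous_on_cosh_pow] by blast
  with A(1) have primitive: "cosh_pow_primitive A (1 / \<alpha>) P"
    by unfold_locales
  obtain c where c: "\<And>x. x \<in> I \<Longrightarrow> P (rapidity x) = \<alpha> * x + c"
    using quadrature[OF primitive A(2)] by blast
  have domain: "I = {x. \<alpha> * x + c \<in> range P}"
    using assms(2) by (intro domain_eq_if_maximal[OF _ primitive A(2) c]) (auto simp: is_maximal_sol_def)
  have "parametrized_solution \<alpha> u u' u'' I A P c"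
    by (intro parametrized_solution.intro parametrized_solution_axioms.intro sol primitive A(2) c domain)
  then show thesis
    by (rule that)
qed

theorem theorem2p2:
  fixes \<alpha> :: real and u :: "real \<Rightarrow> real" and I :: "real set"
  assumes "\<alpha> \<noteq> 0"
    and "is_maximal_sol \<alpha> u I"
  shows "(\<exists>c. \<forall>x\<in>I. 2 * c - x \<in> I \<and> u (2 * c - x) = u x)
       \<and> (\<alpha> > 0 \<longrightarrow> I = UNIV)
       \<and> (\<alpha> < 0 \<longrightarrow> bounded I)
       \<and> (\<alpha> > 0 \<longrightarrow>
            convex_on I u
          \<and> (\<exists>!x0. x0 \<in> I \<and> (\<forall>x\<in>I. u x0 \<le> u x))
          \<and> filterlim u at_top at_top
          \<and> (deriv u \<longlongrightarrow> 1) at_top)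
       \<and> (\<alpha> < 0 \<longrightarrow>
            concave_on I u
          \<and> (\<exists>!x0. x0 \<in> I \<and> (\<forall>x\<in>I. u x \<le> u x0))
          \<and> (\<forall>b. I = {-b<..<b} \<longrightarrow>
                 (u \<longlongrightarrow> 0) (at_left b) \<and> (deriv u \<longlongrightarrow> -1) (at_left b)))"
proof -
  obtain u' u'' A P c where "parametrized_solution \<alpha> u u' u'' I A P c"
    using assms by (rule maximal_sol_parametrization)
  then interpret parametrized_solution \<alpha> u u' u'' I A P c .
  have symmetric: "\<exists>c. \<forall>x\<in>I. 2 * c - x \<in> I \<and> u (2 * c - x) = u x"
    using symmetric_about_center by blast
  show ?thesis
    by (intro conjI impI allI symmetric domain_eq_UNIV bounded_domain
        convex_on_domain unique_minimum filterlim_u_at_top tendsto_deriv_u_at_top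
        concave_on_domain unique_maximum tendsto_u_at_left tendsto_deriv_u_at_left)
qed

end
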